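(* Let $p(x_1,\ldots,x_n)$ be a polynomial in $x_1,x_1^{-1},\ldots,x_n,x_n^{-1}$ over $\mathbb{C}$ and fix $i$ with $1\le i\le n$. Consider the operator $\operatorname{Op}=\operatorname{id}+\Delta_{k_i}\,p(E_{k_1},\ldots,E_{k_n})$ on $\mathbb{C}[k_1,\ldots,k_n]$. Then $\operatorname{Op}$ is invertible, with inverse $$\operatorname{Op}^{-1}=\sum_{l=0}^{\infty}(-1)^l\Delta_{k_i}^l\,p(E_{k_1},\ldots,E_{k_n})^l,$$ where the $l=0$ term is $\operatorname{id}$. Moreover, for every $G\in\mathbb{C}[k_1,\ldots,k_n]$, $$\deg_{k_i}G=\deg_{k_i}\operatorname{Op}G=\deg_{k_i}\operatorname{Op}^{-1}G.$$
   Context: $E_{k_j}$ is the shift operator in the variable $k_j$, $E_{k_j}f(\ldots,k_j,\ldots)=f(\ldots,k_j+1,\ldots)$, with inverse $E_{k_j}^{-1}$; $\Delta_{k_j}=E_{k_j}-\operatorname{id}$. These operators commute, so $p(E_{k_1},\ldots,E_{k_n})$ is a well-defined operator on polynomials. Products of operators denote composition. *)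

theory Defs
  imports Complex_Main "HOL-Library.Poly_Mapping"
begin

text \<open>Variable k_j (paper's k_{j+1}) is indexed by j :: nat.\<close>

type_synonym cpoly = "(nat \<Rightarrow>\<^sub>0 nat) \<Rightarrow>\<^sub>0 complex"

type_synonym claurent = "(nat \<Rightarrow>\<^sub>0 int) \<Rightarrow>\<^sub>0 complex"

definition Var :: "nat \<Rightarrow> cpoly" where
  "Var v = Poly_Mapping.single (Poly_Mapping.single v 1) 1"

definition Const :: "complex \<Rightarrow> cpoly" where
  "Const c = Poly_Mapping.single 0 c"

definition subst :: "(nat \<Rightarrow> cpoly) \<Rightarrow> cpoly \<Rightarrow> cpoly" where
  "subst \<sigma> G = sum (\<lambda>m::nat \<Rightarrow>\<^sub>0 nat. Const (Poly_Mapping.lookup G m) * prod (\<lambda>v::nat. \<sigma> v ^ Poly_Mapping.lookup m v) (Poly_Mapping.keys m)) (Poly_Mapping.keys G)"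

definition vars :: "cpoly \<Rightarrow> nat set" where
  "vars G = \<Union> (Poly_Mapping.keys ` Poly_Mapping.keys G)"

definition lvars :: "claurent \<Rightarrow> nat set" where
  "lvars p = \<Union> (Poly_Mapping.keys ` Poly_Mapping.keys p)"

definition PolyRing :: "nat \<Rightarrow> cpoly set" where
  "PolyRing n = {G. vars G \<subseteq> {..<n}}"

text \<open>Degree in the variable k_i (degree of the zero polynomial taken as 0).\<close>
definition deg :: "nat \<Rightarrow> cpoly \<Rightarrow> nat" where
  "deg i G = Max (insert 0 ((\<lambda>m. Poly_Mapping.lookup m i) ` Poly_Mapping.keys G))"

definition Eop :: "nat \<Rightarrow> cpoly \<Rightarrow> cpoly" where
  "Eop j = subst (\<lambda>v. if v = j then Var v + 1 else Var v)"

definition Einv :: "nat \<Rightarrow> cpoly \<Rightarrow> cpoly" where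
  "Einv j = subst (\<lambda>v. if v = j then Var v - 1 else Var v)"

definition Delta :: "nat \<Rightarrow> cpoly \<Rightarrow> cpoly" where
  "Delta j G = Eop j G - G"

definition Epow :: "nat \<Rightarrow> int \<Rightarrow> cpoly \<Rightarrow> cpoly" where
  "Epow j z = (if z \<ge> 0 then Eop j ^^ nat z else Einv j ^^ nat (- z))"

definition Emon :: "(nat \<Rightarrow>\<^sub>0 int) \<Rightarrow> cpoly \<Rightarrow> cpoly" where
  "Emon a = fold (\<lambda>v f. Epow v (Poly_Mapping.lookup a v) \<circ> f) (sorted_list_of_set (Poly_Mapping.keys a)) id"

definition pE :: "claurent \<Rightarrow> cpoly \<Rightarrow> cpoly" where
  "pE p G = (\<Sum>a\<in>Poly_Mapping.keys p. Const (Poly_Mapping.lookup p a) * Emon a G)"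

end

theory Submission
  imports Defs
begin

text \<open>Write \<open>\<Delta>\<^sub>i\<close> and \<open>E\<^sub>j\<close> for \<open>\<Delta>\<close> and \<open>E\<close> in the variables \<open>k\<^sub>i\<close>, \<open>k\<^sub>j\<close>, and
  \<open>B = - \<Delta>\<^sub>i p(E)\<close>, so that \<open>Op = id - B\<close>. The shifts \<open>E\<^sub>j\<^sup>\<plusminus>\<^sup>1\<close> are the substitutions
  \<open>k\<^sub>j \<mapsto> k\<^sub>j \<plusminus> 1\<close>: they commute, never raise the degree in \<open>k\<^sub>i\<close> and never introduce new
  variables, whereas \<open>\<Delta>\<^sub>i\<close> lowers the degree in \<open>k\<^sub>i\<close> by at least one and annihilates
  polynomials not involving \<open>k\<^sub>i\<close>. Hence \<open>B\<^sup>l G = (-1)\<^sup>l \<Delta>\<^sub>i\<^sup>l p(E)\<^sup>l G\<close> vanishes once \<open>l\<close>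
  exceeds the \<open>k\<^sub>i\<close>-degree of \<open>G\<close>, so the Neumann series \<open>\<Sum> B\<^sup>l G\<close> is a finite sum, and
  telescoping shows that it inverts \<open>id - B\<close> on both sides. Both \<open>Op G - G\<close> and
  \<open>Op\<^sup>-\<^sup>1 G - G\<close> are sums of terms of lower \<open>k\<^sub>i\<close>-degree than \<open>G\<close>, which gives the degree
  equalities.\<close>

section \<open>Operators on abelian groups\<close>

lemma additive_id: "additive id"
  by (simp add: additive_def)

lemma additive_comp: "additive f \<Longrightarrow> additive g \<Longrightarrow> additive (f \<circ> g)"
  by (simp add: additive_def)

lemma additive_funpow:
  fixes f :: "'a::ab_group_add \<Rightarrow> 'a"
  shows "additive f \<Longrightarrow> additive (f ^^ n)"
  by (induction n) (simp_all only: funpow.simps additive_id additive_comp)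

lemma additive_neg_one_power_mult:
  fixes f :: "'a::ring_1 \<Rightarrow> 'b::ring_1"
  assumes "additive f"
  shows "f ((-1) ^ l * x) = (-1) ^ l * f x"
  by (cases "even l") (simp_all add: additive.minus[OF assms])

lemma funpow_comp_commute: "f \<circ> g = g \<circ> f \<Longrightarrow> f \<circ> (g ^^ n) = (g ^^ n) \<circ> f"
  by (induction n) (simp_all add: comp_assoc, metis comp_assoc)

lemma funpow_neg_comp:
  fixes A P :: "'a::ring_1 \<Rightarrow> 'a"
  assumes "additive A" "additive P" "P \<circ> A = A \<circ> P"
  shows "((\<lambda>x. - A (P x)) ^^ l) x = (-1) ^ l * (A ^^ l) ((P ^^ l) x)"
proof (induction l)
  case (Suc l)
  have "P \<circ> A ^^ l = A ^^ l \<circ> P"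
    by (rule funpow_comp_commute[OF assms(3)])
  then have "P ((A ^^ l) y) = (A ^^ l) (P y)" for y
    by (metis comp_apply)
  then show ?case
    using Suc.IH
    by (simp add: additive_neg_one_power_mult[OF assms(1)] additive_neg_one_power_mult[OF assms(2)])
qed simp

lemma geometric_sum_funpow:
  fixes B :: "'a::ab_group_add \<Rightarrow> 'a"
  assumes "additive B"
  shows "(\<Sum>l<N. (B ^^ l) x) - B (\<Sum>l<N. (B ^^ l) x) = x - (B ^^ N) x"
    and "(\<Sum>l<N. (B ^^ l) (x - B x)) = x - (B ^^ N) x"
proof -
  have "(\<Sum>l<N. (B ^^ l) x) - B (\<Sum>l<N. (B ^^ l) x) = (\<Sum>l<N. (B ^^ l) x - (B ^^ Suc l) x)"
    by (simp add: additive.sum[OF assms] sum_subtractf)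
  also have "\<dots> = x - (B ^^ N) x"
    by (subst sum_lessThan_telescope') simp
  finally show "(\<Sum>l<N. (B ^^ l) x) - B (\<Sum>l<N. (B ^^ l) x) = x - (B ^^ N) x" .
  have "(B ^^ l) (x - B x) = (B ^^ l) x - (B ^^ Suc l) x" for l
    by (simp add: additive.diff[OF additive_funpow[OF assms]] funpow_swap1[symmetric])
  then show "(\<Sum>l<N. (B ^^ l) (x - B x)) = x - (B ^^ N) x"
    using sum_lessThan_telescope'[of "\<lambda>l. (B ^^ l) x" N] by simp
qed

lemma sum_lessThan_LEAST_eventually_zero:
  fixes f :: "nat \<Rightarrow> 'a::comm_monoid_add"
  assumes "\<forall>l\<ge>M. f l = 0"
  shows "(\<Sum>l<(LEAST N. \<forall>l\<ge>N. f l = 0). f l) = (\<Sum>l<M. f l)"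
proof -
  define N where "N = (LEAST N. \<forall>l\<ge>N. f l = 0)"
  have vanish: "\<forall>l\<ge>N. f l = 0"
    unfolding N_def using assms by (rule LeastI)
  have "N \<le> M"
    unfolding N_def using assms by (rule Least_le)
  then have "(\<Sum>l<N. f l) = (\<Sum>l<M. f l)"
    by (intro sum.mono_neutral_left) (use vanish in auto)
  then show ?thesis
    by (simp add: N_def)
qed

section \<open>Substitution\<close>

lemma Const_add: "Const (a + b) = Const a + Const b"
  by (simp add: Const_def single_add)

lemma Const_mult: "Const (a * b) = Const a * Const b"
  by (simp add: Const_def mult_single)

lemma Const_1 [simp]: "Const 1 = 1"
  by (simp add: Const_def)

lemma Const_neg_one_power: "Const ((-1) ^ l) = (-1) ^ l"
  by (induction l) (simp_all add: Const_mult Const_def single_uminus)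

lemma Const_mult_single: "Const c * Poly_Mapping.single m 1 = Poly_Mapping.single m c"
  by (simp add: Const_def mult_single)

lemma keys_Const_mult_subset: "Poly_Mapping.keys (Const c * G) \<subseteq> Poly_Mapping.keys G"
proof -
  have "Const c * G = Poly_Mapping.map ((*) c) G"
    by (simp add: Const_def mult_map_scale_conv_mult)
  then show ?thesis
    by (auto simp: in_keys_iff map.rep_eq when_def)
qed

lemma poly_mapping_sum_single:
  fixes G :: "'a \<Rightarrow>\<^sub>0 'b::comm_monoid_add"
  shows "(\<Sum>m\<in>Poly_Mapping.keys G. Poly_Mapping.single m (Poly_Mapping.lookup G m)) = G"
proof (rule poly_mapping_eqI)
  fix k
  show "Poly_Mapping.lookup (\<Sum>m\<in>Poly_Mapping.keys G. Poly_Mapping.single m (Poly_Mapping.lookup G m)) k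
      = Poly_Mapping.lookup G k"
    by (cases "k \<in> Poly_Mapping.keys G") (auto simp: lookup_sum lookup_single when_def in_keys_iff)
qed

definition Mon :: "(nat \<Rightarrow> cpoly) \<Rightarrow> (nat \<Rightarrow>\<^sub>0 nat) \<Rightarrow> cpoly" where
  "Mon \<sigma> m = (\<Prod>v\<in>Poly_Mapping.keys m. \<sigma> v ^ Poly_Mapping.lookup m v)"

lemma subst_eq_sum_Mon:
  "subst \<sigma> G = (\<Sum>m\<in>Poly_Mapping.keys G. Const (Poly_Mapping.lookup G m) * Mon \<sigma> m)"
  by (simp add: subst_def Mon_def)

lemma subst_eq_sum_Mon_superset:
  assumes "finite S" "Poly_Mapping.keys G \<subseteq> S"
  shows "subst \<sigma> G = (\<Sum>m\<in>S. Const (Poly_Mapping.lookup G m) * Mon \<sigma> m)"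
  unfolding subst_eq_sum_Mon
  by (rule sum.mono_neutral_left) (use assms in \<open>auto simp: in_keys_iff Const_def\<close>)

lemma Mon_eq_prod_superset:
  assumes "finite S" "Poly_Mapping.keys m \<subseteq> S"
  shows "Mon \<sigma> m = (\<Prod>v\<in>S. \<sigma> v ^ Poly_Mapping.lookup m v)"
  unfolding Mon_def
  by (rule prod.mono_neutral_left) (use assms in \<open>auto simp: in_keys_iff\<close>)

lemma Mon_add: "Mon \<sigma> (a + b) = Mon \<sigma> a * Mon \<sigma> b"
proof -
  let ?S = "Poly_Mapping.keys a \<union> Poly_Mapping.keys b"
  have "Mon \<sigma> (a + b) = (\<Prod>v\<in>?S. \<sigma> v ^ Poly_Mapping.lookup a v * \<sigma> v ^ Poly_Mapping.lookup b v)"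
    by (subst Mon_eq_prod_superset[of ?S]) (auto simp: keys_add lookup_add power_add)
  also have "\<dots> = Mon \<sigma> a * Mon \<sigma> b"
    by (simp add: prod.distrib Mon_eq_prod_superset[of ?S])
  finally show ?thesis .
qed

lemma Mon_Var: "Mon Var m = Poly_Mapping.single m 1"
proof -
  have Var_power: "Var v ^ k = Poly_Mapping.single (Poly_Mapping.single v k) 1" for v k
    by (induction k) (auto simp: Var_def mult_single single_add[symmetric])
  have prod_single: "(\<Prod>v\<in>A. Poly_Mapping.single (f v) (1::complex)) = Poly_Mapping.single (sum f A) 1"
    for A and f :: "nat \<Rightarrow> nat \<Rightarrow>\<^sub>0 nat"
    by (induction A rule: infinite_finite_induct) (auto simp: mult_single)
  show ?thesis
    by (simp add: Mon_def Var_power prod_single poly_mapping_sum_single)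
qed

lemma Mon_split:
  "Mon \<sigma> m = \<sigma> i ^ Poly_Mapping.lookup m i
     * (\<Prod>v\<in>Poly_Mapping.keys m - {i}. \<sigma> v ^ Poly_Mapping.lookup m v)"
proof -
  have "Mon \<sigma> m = (\<Prod>v\<in>insert i (Poly_Mapping.keys m). \<sigma> v ^ Poly_Mapping.lookup m v)"
    by (rule Mon_eq_prod_superset) auto
  then show ?thesis
    by (simp add: prod.insert_remove)
qed

lemma additive_subst: "additive (subst \<sigma>)"
proof
  fix G H :: cpoly
  let ?S = "Poly_Mapping.keys G \<union> Poly_Mapping.keys H"
  show "subst \<sigma> (G + H) = subst \<sigma> G + subst \<sigma> H"
    by (simp add: subst_eq_sum_Mon_superset[of ?S] keys_add lookup_add Const_add
        distrib_right sum.distrib)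
qed

lemmas subst_add = additive.add[OF additive_subst]
  and subst_diff = additive.diff[OF additive_subst]
  and subst_sum = additive.sum[OF additive_subst]

lemma subst_single: "subst \<sigma> (Poly_Mapping.single m c) = Const c * Mon \<sigma> m"
  by (simp add: subst_eq_sum_Mon Const_def)

lemma subst_Const [simp]: "subst \<sigma> (Const c) = Const c"
  by (simp add: Const_def subst_single Mon_def)

lemma subst_1 [simp]: "subst \<sigma> 1 = 1"
  using subst_Const[of \<sigma> 1] by simp

lemma subst_Var [simp]: "subst \<sigma> (Var v) = \<sigma> v"
  by (simp add: Var_def subst_single Mon_def)

lemma subst_Var_id: "subst Var G = G"
  by (simp add: subst_eq_sum_Mon Mon_Var Const_mult_single poly_mapping_sum_single)

lemma subst_mult: "subst \<sigma> (G * H) = subst \<sigma> G * subst \<sigma> H"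
proof -
  have single_mult: "subst \<sigma> (Poly_Mapping.single m c * H) = Const c * Mon \<sigma> m * subst \<sigma> H" for m c
  proof -
    have "Poly_Mapping.single m c * H
        = (\<Sum>m'\<in>Poly_Mapping.keys H. Poly_Mapping.single (m + m') (c * Poly_Mapping.lookup H m'))"
      by (subst (1) poly_mapping_sum_single[of H, symmetric]) (simp add: sum_distrib_left mult_single)
    then have "subst \<sigma> (Poly_Mapping.single m c * H)
        = (\<Sum>m'\<in>Poly_Mapping.keys H. Const c * Mon \<sigma> m * (Const (Poly_Mapping.lookup H m') * Mon \<sigma> m'))"
      by (simp add: subst_sum subst_single Mon_add Const_mult algebra_simps)
    then show ?thesis
      by (simp add: subst_eq_sum_Mon[of _ H] sum_distrib_left)
  qed
  have "G * H = (\<Sum>m\<in>Poly_Mapping.keys G. Poly_Mapping.single m (Poly_Mapping.lookup G m) * H)"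
    by (subst (1) poly_mapping_sum_single[of G, symmetric]) (simp add: sum_distrib_right)
  then show ?thesis
    by (simp add: subst_sum single_mult subst_eq_sum_Mon[of _ G] sum_distrib_right)
qed

lemma subst_power: "subst \<sigma> (G ^ k) = subst \<sigma> G ^ k"
  by (induction k) (simp_all add: subst_mult)

lemma subst_prod: "subst \<sigma> (\<Prod>x\<in>A. f x) = (\<Prod>x\<in>A. subst \<sigma> (f x))"
  by (induction A rule: infinite_finite_induct) (simp_all add: subst_mult)

lemma subst_subst: "subst \<sigma> (subst \<tau> G) = subst (\<lambda>v. subst \<sigma> (\<tau> v)) G"
  by (simp add: subst_eq_sum_Mon[of \<tau>] subst_eq_sum_Mon[of "\<lambda>v. subst \<sigma> (\<tau> v)"]
      subst_sum subst_mult Mon_def subst_prod subst_power)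

lemma subst_comp_commute:
  assumes "\<And>v. subst \<sigma> (\<tau> v) = subst \<tau> (\<sigma> v)"
  shows "subst \<sigma> \<circ> subst \<tau> = subst \<tau> \<circ> subst \<sigma>"
  by (simp add: fun_eq_iff subst_subst assms)

section \<open>Variables and degrees\<close>

lemma vars_add: "vars (G + H) \<subseteq> vars G \<union> vars H"
  using keys_add[of G H] by (auto simp: vars_def)

lemma vars_diff: "vars (G - H) \<subseteq> vars G \<union> vars H"
  using keys_diff[of G H] by (auto simp: vars_def)

lemma vars_uminus [simp]: "vars (- G) = vars G"
  by (simp add: vars_def)

lemma vars_sum: "vars (sum f A) \<subseteq> (\<Union>a\<in>A. vars (f a))"
  using keys_sum[of f A] unfolding vars_def by blast

lemma vars_mult: "vars (G * H) \<subseteq> vars G \<union> vars H"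
proof
  fix v assume "v \<in> vars (G * H)"
  then obtain m where m: "m \<in> Poly_Mapping.keys (G * H)" "v \<in> Poly_Mapping.keys m"
    by (auto simp: vars_def)
  then obtain a b where "m = a + b" "a \<in> Poly_Mapping.keys G" "b \<in> Poly_Mapping.keys H"
    using keys_mult[of G H] by blast
  with m(2) show "v \<in> vars G \<union> vars H"
    using keys_add[of a b] by (auto simp: vars_def)
qed

lemma vars_Const_mult: "vars (Const c * G) \<subseteq> vars G"
  using keys_Const_mult_subset by (auto simp: vars_def)

lemma vars_1 [simp]: "vars 1 = {}"
  by (simp add: vars_def)

lemma vars_power: "vars (G ^ k) \<subseteq> vars G"
proof (induction k)
  case (Suc k)
  then show ?case
    using vars_mult[of G "G ^ k"] by auto
qed simp

lemma vars_prod: "vars (prod f A) \<subseteq> (\<Union>a\<in>A. vars (f a))"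
proof (induction A rule: infinite_finite_induct)
  case (insert a A)
  then show ?case
    using vars_mult[of "f a" "prod f A"] by auto
qed simp_all

lemma vars_Var [simp]: "vars (Var v) = {v}"
  by (simp add: vars_def Var_def)

lemma vars_subst: "vars (subst \<sigma> G) \<subseteq> (\<Union>v\<in>vars G. vars (\<sigma> v))"
proof -
  have vars_Mon: "vars (Mon \<sigma> m) \<subseteq> (\<Union>v\<in>Poly_Mapping.keys m. vars (\<sigma> v))" for m
    unfolding Mon_def by (rule order_trans[OF vars_prod UN_mono[OF order_refl vars_power]])
  have "vars (subst \<sigma> G) \<subseteq> (\<Union>m\<in>Poly_Mapping.keys G. vars (Mon \<sigma> m))"
    unfolding subst_eq_sum_Mon
    by (rule order_trans[OF vars_sum UN_mono[OF order_refl vars_Const_mult]])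
  also have "\<dots> \<subseteq> (\<Union>m\<in>Poly_Mapping.keys G. \<Union>v\<in>Poly_Mapping.keys m. vars (\<sigma> v))"
    by (rule UN_mono[OF order_refl vars_Mon])
  also have "\<dots> = (\<Union>v\<in>vars G. vars (\<sigma> v))"
    unfolding vars_def[of G] by blast
  finally show ?thesis .
qed

lemma vars_subst_subset:
  assumes "\<And>v. vars (\<sigma> v) \<subseteq> {v}"
  shows "vars (subst \<sigma> G) \<subseteq> vars G"
  using vars_subst[of \<sigma> G] assms by blast

lemma deg_le_iff: "deg i G \<le> d \<longleftrightarrow> (\<forall>m\<in>Poly_Mapping.keys G. Poly_Mapping.lookup m i \<le> d)"
  unfolding deg_def by (subst Max_le_iff) auto

lemma lookup_le_deg: "m \<in> Poly_Mapping.keys G \<Longrightarrow> Poly_Mapping.lookup m i \<le> deg i G"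
  using deg_le_iff by blast

lemma deg_attained:
  assumes "0 < deg i G"
  obtains m where "m \<in> Poly_Mapping.keys G" "Poly_Mapping.lookup m i = deg i G"
proof -
  have "deg i G \<in> insert 0 ((\<lambda>m. Poly_Mapping.lookup m i) ` Poly_Mapping.keys G)"
    unfolding deg_def by (rule Max_in) auto
  with assms that show ?thesis
    by auto
qed

lemma deg_add_le: "deg i (G + H) \<le> max (deg i G) (deg i H)"
  unfolding deg_le_iff
proof
  fix m assume "m \<in> Poly_Mapping.keys (G + H)"
  then have "m \<in> Poly_Mapping.keys G \<or> m \<in> Poly_Mapping.keys H"
    using keys_add[of G H] by blast
  then show "Poly_Mapping.lookup m i \<le> max (deg i G) (deg i H)"
    using lookup_le_deg[of m G i] lookup_le_deg[of m H i] by linarith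
qed

lemma deg_diff_le: "deg i (G - H) \<le> max (deg i G) (deg i H)"
  unfolding deg_le_iff
proof
  fix m assume "m \<in> Poly_Mapping.keys (G - H)"
  then have "m \<in> Poly_Mapping.keys G \<or> m \<in> Poly_Mapping.keys H"
    using keys_diff[of G H] by blast
  then show "Poly_Mapping.lookup m i \<le> max (deg i G) (deg i H)"
    using lookup_le_deg[of m G i] lookup_le_deg[of m H i] by linarith
qed

lemma deg_add_eq_left:
  assumes "H \<noteq> 0 \<Longrightarrow> deg i H < deg i G"
  shows "deg i (G + H) = deg i G"
proof (cases "H = 0")
  case False
  then have less: "deg i H < deg i G"
    by (rule assms)
  then obtain m where m: "m \<in> Poly_Mapping.keys G" "Poly_Mapping.lookup m i = deg i G"
    using deg_attained by (metis gr_zeroI not_less0)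
  then have "m \<notin> Poly_Mapping.keys H"
    using less lookup_le_deg[of m H i] by auto
  with m(1) have "m \<in> Poly_Mapping.keys (G + H)"
    by (simp add: in_keys_iff lookup_add)
  then have "deg i G \<le> deg i (G + H)"
    using lookup_le_deg m(2) by metis
  moreover have "deg i (G + H) \<le> deg i G"
    using deg_add_le[of i G H] less by simp
  ultimately show ?thesis
    by (rule antisym[rotated])
qed simp

lemma deg_sum_le: "(\<And>a. a \<in> A \<Longrightarrow> deg i (f a) \<le> d) \<Longrightarrow> deg i (sum f A) \<le> d"
  using keys_sum[of f A] unfolding deg_le_iff by blast

lemma deg_mult_le: "deg i (G * H) \<le> deg i G + deg i H"
  unfolding deg_le_iff
proof
  fix m assume "m \<in> Poly_Mapping.keys (G * H)"
  then obtain a b where "m = a + b" "a \<in> Poly_Mapping.keys G" "b \<in> Poly_Mapping.keys H"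
    using keys_mult[of G H] by blast
  then show "Poly_Mapping.lookup m i \<le> deg i G + deg i H"
    by (simp add: lookup_add add_mono lookup_le_deg)
qed

lemma deg_1 [simp]: "deg i 1 = 0"
  by (simp add: deg_def)

lemma deg_power_le: "deg i (G ^ k) \<le> k * deg i G"
proof (induction k)
  case (Suc k)
  then show ?case
    using deg_mult_le[of i G "G ^ k"] by simp
qed simp

lemma deg_prod_le: "deg i (prod f A) \<le> (\<Sum>a\<in>A. deg i (f a))"
proof (induction A rule: infinite_finite_induct)
  case (insert a A)
  then show ?case
    using deg_mult_le[of i "f a" "prod f A"] by simp
qed simp_all

lemma deg_Var: "deg i (Var v) = (if v = i then 1 else 0)"
  by (simp add: deg_def Var_def lookup_single when_def)

lemma deg_Const_mult_le: "deg i (Const c * G) \<le> deg i G"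
  using keys_Const_mult_subset lookup_le_deg unfolding deg_le_iff by blast

lemma deg_subst_le:
  assumes "\<And>v. deg i (\<sigma> v) \<le> deg i (Var v)"
  shows "deg i (subst \<sigma> G) \<le> deg i G"
  unfolding subst_eq_sum_Mon
proof (rule deg_sum_le)
  fix m assume m: "m \<in> Poly_Mapping.keys G"
  have "deg i (Mon \<sigma> m) \<le> (\<Sum>v\<in>Poly_Mapping.keys m. deg i (\<sigma> v ^ Poly_Mapping.lookup m v))"
    unfolding Mon_def by (rule deg_prod_le)
  also have "\<dots> \<le> (\<Sum>v\<in>Poly_Mapping.keys m. Poly_Mapping.lookup m v * deg i (Var v))"
    by (intro sum_mono order_trans[OF deg_power_le] mult_le_mono2 assms)
  also have "\<dots> = Poly_Mapping.lookup m i"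
    by (auto simp: deg_Var in_keys_iff if_distrib cong: if_cong)
  also have "\<dots> \<le> deg i G"
    using m by (rule lookup_le_deg)
  finally show "deg i (Const (Poly_Mapping.lookup G m) * Mon \<sigma> m) \<le> deg i G"
    using deg_Const_mult_le order_trans by blast
qed

section \<open>Shift operators\<close>

lemma comp_closed_Emon:
  assumes "Q id" and "\<And>f g. Q f \<Longrightarrow> Q g \<Longrightarrow> Q (f \<circ> g)"
    and "\<And>j. Q (Eop j)" and "\<And>j. Q (Einv j)"
  shows "Q (Emon a)"
proof -
  have funpow: "Q (f ^^ k)" if "Q f" for f k
    by (induction k) (simp_all only: funpow.simps assms(1,2) that)
  have Epow: "Q (Epow j z)" for j z
    by (simp add: Epow_def funpow assms(3,4))
  have "Q (fold (\<lambda>v f. Epow v (h v) \<circ> f) vs g)" if "Q g" for vs g h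
    using that by (induction vs arbitrary: g) (simp_all add: Epow assms(2))
  then show ?thesis
    by (simp add: Emon_def assms(1))
qed

lemma additive_Eop: "additive (Eop j)"
  by (simp add: Eop_def additive_subst)

lemma additive_Einv: "additive (Einv j)"
  by (simp add: Einv_def additive_subst)

lemma Eop_Eop_commute: "Eop i \<circ> Eop j = Eop j \<circ> Eop i"
  unfolding Eop_def by (rule subst_comp_commute) (simp add: subst_add)

lemma Eop_Einv_commute: "Eop i \<circ> Einv j = Einv j \<circ> Eop i"
  unfolding Eop_def Einv_def by (rule subst_comp_commute) (simp add: subst_add subst_diff)

lemma Eop_Const_mult: "Eop i (Const c * G) = Const c * Eop i G"
  by (simp add: Eop_def subst_mult)

lemma deg_Eop_le: "deg i (Eop j G) \<le> deg i G"
  unfolding Eop_def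
  by (rule deg_subst_le) (use deg_add_le[of i "Var j" 1] in auto)

lemma deg_Einv_le: "deg i (Einv j G) \<le> deg i G"
  unfolding Einv_def
  by (rule deg_subst_le) (use deg_diff_le[of i "Var j" 1] in auto)

lemma vars_Eop: "vars (Eop j G) \<subseteq> vars G"
  unfolding Eop_def
  by (rule vars_subst_subset) (use vars_add[of "Var j" 1] in auto)

lemma vars_Einv: "vars (Einv j G) \<subseteq> vars G"
  unfolding Einv_def
  by (rule vars_subst_subset) (use vars_diff[of "Var j" 1] in auto)

lemma additive_Emon: "additive (Emon a)"
  by (rule comp_closed_Emon[where Q = additive])
    (assumption | rule additive_id additive_comp additive_Eop additive_Einv)+

lemma Emon_Eop_commute: "Emon a \<circ> Eop i = Eop i \<circ> Emon a"
proof (rule comp_closed_Emon[where Q = "\<lambda>f. f \<circ> Eop i = Eop i \<circ> f"])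
  fix f g :: "cpoly \<Rightarrow> cpoly"
  assume "f \<circ> Eop i = Eop i \<circ> f" "g \<circ> Eop i = Eop i \<circ> g"
  then show "(f \<circ> g) \<circ> Eop i = Eop i \<circ> (f \<circ> g)"
    by (metis comp_assoc)
qed (simp_all add: Eop_Eop_commute Eop_Einv_commute)

lemma deg_Emon_le: "deg i (Emon a G) \<le> deg i G"
proof -
  have "\<forall>G. deg i (Emon a G) \<le> deg i G"
  proof (rule comp_closed_Emon[where Q = "\<lambda>f. \<forall>G. deg i (f G) \<le> deg i G"])
    fix f g :: "cpoly \<Rightarrow> cpoly"
    assume "\<forall>G. deg i (f G) \<le> deg i G" "\<forall>G. deg i (g G) \<le> deg i G"
    then show "\<forall>G. deg i ((f \<circ> g) G) \<le> deg i G"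
      by (metis comp_apply order_trans)
  qed (simp_all add: deg_Eop_le deg_Einv_le)
  then show ?thesis ..
qed

lemma vars_Emon: "vars (Emon a G) \<subseteq> vars G"
proof -
  have "\<forall>G. vars (Emon a G) \<subseteq> vars G"
  proof (rule comp_closed_Emon[where Q = "\<lambda>f. \<forall>G. vars (f G) \<subseteq> vars G"])
    fix f g :: "cpoly \<Rightarrow> cpoly"
    assume "\<forall>G. vars (f G) \<subseteq> vars G" "\<forall>G. vars (g G) \<subseteq> vars G"
    then show "\<forall>G. vars ((f \<circ> g) G) \<subseteq> vars G"
      by (metis comp_apply order_trans)
  qed (simp_all add: vars_Eop vars_Einv)
  then show ?thesis ..
qed

lemma additive_pE: "additive (pE p)"
  by (simp add: additive_def pE_def additive.add[OF additive_Emon] distrib_left sum.distrib)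

lemma pE_Eop_commute: "pE p \<circ> Eop i = Eop i \<circ> pE p"
proof
  fix G
  have "Emon a (Eop i G) = Eop i (Emon a G)" for a
    using Emon_Eop_commute by (metis comp_apply)
  then show "(pE p \<circ> Eop i) G = (Eop i \<circ> pE p) G"
    by (simp add: pE_def additive.sum[OF additive_Eop] Eop_Const_mult)
qed

lemma deg_pE_le: "deg i (pE p G) \<le> deg i G"
  unfolding pE_def
  by (intro deg_sum_le order_trans[OF deg_Const_mult_le deg_Emon_le])

lemma deg_pE_funpow_le: "deg i ((pE p ^^ l) G) \<le> deg i G"
proof (induction l)
  case (Suc l)
  then show ?case
    using deg_pE_le[of i p "(pE p ^^ l) G"] by simp
qed simp

lemma vars_pE: "vars (pE p G) \<subseteq> vars G"
  unfolding pE_def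
  by (intro order_trans[OF vars_sum] UN_least order_trans[OF vars_Const_mult vars_Emon])

lemma additive_Delta: "additive (Delta j)"
  by (simp add: additive_def Delta_def additive.add[OF additive_Eop])

lemma pE_Delta_commute: "pE p \<circ> Delta i = Delta i \<circ> pE p"
  using pE_Eop_commute
  by (simp add: fun_eq_iff Delta_def additive.diff[OF additive_pE])

lemma vars_Delta: "vars (Delta j G) \<subseteq> vars G"
  unfolding Delta_def using vars_diff vars_Eop by blast

section \<open>The difference operator lowers the degree\<close>

lemma Delta_eq_sum:
  "Delta i G = (\<Sum>m\<in>Poly_Mapping.keys G. Const (Poly_Mapping.lookup G m)
     * (((Var i + 1) ^ Poly_Mapping.lookup m i - Var i ^ Poly_Mapping.lookup m i)
        * (\<Prod>v\<in>Poly_Mapping.keys m - {i}. Var v ^ Poly_Mapping.lookup m v)))"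
proof -
  define \<sigma> where "\<sigma> = (\<lambda>v. if v = i then Var v + 1 else Var v)"
  have "Mon \<sigma> m - Mon Var m
      = ((Var i + 1) ^ Poly_Mapping.lookup m i - Var i ^ Poly_Mapping.lookup m i)
        * (\<Prod>v\<in>Poly_Mapping.keys m - {i}. Var v ^ Poly_Mapping.lookup m v)" for m
  proof -
    have "(\<Prod>v\<in>Poly_Mapping.keys m - {i}. \<sigma> v ^ Poly_Mapping.lookup m v)
        = (\<Prod>v\<in>Poly_Mapping.keys m - {i}. Var v ^ Poly_Mapping.lookup m v)"
      by (rule prod.cong) (auto simp: \<sigma>_def)
    moreover have "\<sigma> i = Var i + 1"
      by (simp add: \<sigma>_def)
    ultimately show ?thesis
      using Mon_split[of \<sigma> m i] Mon_split[of Var m i] by (simp add: left_diff_distrib)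
  qed
  moreover have "Delta i G = (\<Sum>m\<in>Poly_Mapping.keys G. Const (Poly_Mapping.lookup G m) * (Mon \<sigma> m - Mon Var m))"
    unfolding Delta_def Eop_def \<sigma>_def[symmetric]
    by (subst (2) subst_Var_id[symmetric])
      (simp add: subst_eq_sum_Mon sum_subtractf right_diff_distrib)
  ultimately show ?thesis
    by simp
qed

lemma deg_shifted_power_diff_le: "deg i ((Var i + 1) ^ a - Var i ^ a) \<le> a - 1"
proof -
  have "(Var i + 1) ^ a - Var i ^ a = (\<Sum>k<a. Const (of_nat (a choose k)) * Var i ^ k)"
    by (simp add: binomial_ring lessThan_Suc_atMost[symmetric] Const_def)
  also have "deg i \<dots> \<le> a - 1"
  proof (rule deg_sum_le)
    fix k assume "k \<in> {..<a}"
    then have "k * deg i (Var i) \<le> a - 1"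
      by (simp add: deg_Var)
    then show "deg i (Const (of_nat (a choose k)) * Var i ^ k) \<le> a - 1"
      using deg_Const_mult_le deg_power_le order_trans by metis
  qed
  finally show ?thesis .
qed

lemma deg_Delta_le: "deg i (Delta i G) \<le> deg i G - 1"
  unfolding Delta_eq_sum
proof (intro deg_sum_le order_trans[OF deg_Const_mult_le] order_trans[OF deg_mult_le])
  fix m assume m: "m \<in> Poly_Mapping.keys G"
  have "deg i (\<Prod>v\<in>Poly_Mapping.keys m - {i}. Var v ^ Poly_Mapping.lookup m v)
      \<le> (\<Sum>v\<in>Poly_Mapping.keys m - {i}. Poly_Mapping.lookup m v * deg i (Var v))"
    by (intro order_trans[OF deg_prod_le] sum_mono deg_power_le)
  also have "\<dots> = 0"
    by (simp add: deg_Var)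
  finally have "deg i (\<Prod>v\<in>Poly_Mapping.keys m - {i}. Var v ^ Poly_Mapping.lookup m v) = 0"
    by simp
  moreover have "Poly_Mapping.lookup m i - 1 \<le> deg i G - 1"
    using lookup_le_deg[OF m] by (rule diff_le_mono)
  ultimately show "deg i ((Var i + 1) ^ Poly_Mapping.lookup m i - Var i ^ Poly_Mapping.lookup m i)
      + deg i (\<Prod>v\<in>Poly_Mapping.keys m - {i}. Var v ^ Poly_Mapping.lookup m v) \<le> deg i G - 1"
    using deg_shifted_power_diff_le[of i "Poly_Mapping.lookup m i"] by simp
qed

lemma Delta_eq_0_if_deg_eq_0:
  assumes "deg i G = 0"
  shows "Delta i G = 0"
proof -
  have "Poly_Mapping.lookup m i = 0" if "m \<in> Poly_Mapping.keys G" for m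
    using lookup_le_deg[OF that, of i] assms by simp
  then show ?thesis
    unfolding Delta_eq_sum by (auto intro: sum.neutral)
qed

lemma deg_Delta_less: "Delta i G \<noteq> 0 \<Longrightarrow> deg i (Delta i G) < deg i G"
  using deg_Delta_le[of i G] Delta_eq_0_if_deg_eq_0[of i G] by linarith

lemma deg_Delta_funpow_le: "deg i ((Delta i ^^ l) G) \<le> deg i G - l"
proof (induction l)
  case (Suc l)
  then show ?case
    using deg_Delta_le[of i "(Delta i ^^ l) G"] by simp
qed simp

lemma Delta_funpow_eq_0:
  assumes "deg i G < l"
  shows "(Delta i ^^ l) G = 0"
proof -
  obtain k where "l = Suc k"
    using assms by (cases l) auto
  moreover have "deg i ((Delta i ^^ k) G) = 0"
    using deg_Delta_funpow_le[of i k G] assms \<open>l = Suc k\<close> by simp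
  ultimately show ?thesis
    by (simp add: Delta_eq_0_if_deg_eq_0)
qed

section \<open>The Neumann series\<close>

definition neg_Delta_pE :: "nat \<Rightarrow> claurent \<Rightarrow> cpoly \<Rightarrow> cpoly" where
  "neg_Delta_pE i p G = - Delta i (pE p G)"

lemma additive_neg_Delta_pE: "additive (neg_Delta_pE i p)"
  by (simp add: additive_def neg_Delta_pE_def additive.add[OF additive_pE] additive.add[OF additive_Delta])

lemma neg_Delta_pE_funpow:
  "(neg_Delta_pE i p ^^ l) G = Const ((-1) ^ l) * (Delta i ^^ l) ((pE p ^^ l) G)"
  using funpow_neg_comp[OF additive_Delta additive_pE pE_Delta_commute]
  by (simp add: neg_Delta_pE_def[abs_def] Const_neg_one_power)

lemma deg_neg_Delta_pE_funpow_le: "deg i ((neg_Delta_pE i p ^^ l) G) \<le> deg i G - l"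
  unfolding neg_Delta_pE_funpow
  by (intro order_trans[OF deg_Const_mult_le] order_trans[OF deg_Delta_funpow_le]
      diff_le_mono deg_pE_funpow_le)

lemma neg_Delta_pE_funpow_eq_0:
  assumes "deg i G < l"
  shows "(neg_Delta_pE i p ^^ l) G = 0"
proof -
  have "deg i ((pE p ^^ l) G) < l"
    using deg_pE_funpow_le assms by (rule le_less_trans)
  then show ?thesis
    by (simp add: neg_Delta_pE_funpow Delta_funpow_eq_0)
qed

lemma vars_neg_Delta_pE_funpow: "vars ((neg_Delta_pE i p ^^ l) G) \<subseteq> vars G"
proof (induction l)
  case (Suc l)
  let ?H = "(neg_Delta_pE i p ^^ l) G"
  have "(neg_Delta_pE i p ^^ Suc l) G = - Delta i (pE p ?H)"
    by (simp only: funpow.simps comp_apply neg_Delta_pE_def[of i p ?H])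
  then show ?case
    using vars_Delta[of i "pE p ?H"] vars_pE[of p ?H] Suc.IH by simp
qed simp

text \<open>Truncating the series at \<open>deg i G + 1\<close> terms loses nothing, since all later terms
  vanish by \<open>neg_Delta_pE_funpow_eq_0\<close>.\<close>

definition neumann_inv :: "nat \<Rightarrow> claurent \<Rightarrow> cpoly \<Rightarrow> cpoly" where
  "neumann_inv i p G = (\<Sum>l<Suc (deg i G). (neg_Delta_pE i p ^^ l) G)"

lemma deg_diff_neg_Delta_pE: "deg i (G - neg_Delta_pE i p G) = deg i G"
proof -
  have "Delta i (pE p G) \<noteq> 0 \<Longrightarrow> deg i (Delta i (pE p G)) < deg i G"
    using deg_Delta_less deg_pE_le less_le_trans by blast
  then show ?thesis
    unfolding neg_Delta_pE_def diff_minus_eq_add by (rule deg_add_eq_left)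
qed

lemma neumann_inv_right: "neumann_inv i p G - neg_Delta_pE i p (neumann_inv i p G) = G"
proof -
  have "(neg_Delta_pE i p ^^ Suc (deg i G)) G = 0"
    by (rule neg_Delta_pE_funpow_eq_0) simp
  then show ?thesis
    unfolding neumann_inv_def geometric_sum_funpow(1)[OF additive_neg_Delta_pE] by simp
qed

lemma neumann_inv_left: "neumann_inv i p (G - neg_Delta_pE i p G) = G"
proof -
  have "(neg_Delta_pE i p ^^ Suc (deg i G)) G = 0"
    by (rule neg_Delta_pE_funpow_eq_0) simp
  then show ?thesis
    unfolding neumann_inv_def deg_diff_neg_Delta_pE geometric_sum_funpow(2)[OF additive_neg_Delta_pE]
    by simp
qed

lemma deg_neumann_inv: "deg i (neumann_inv i p G) = deg i G"
proof -
  let ?H = "\<Sum>l<deg i G. (neg_Delta_pE i p ^^ Suc l) G"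
  have "neumann_inv i p G = G + ?H"
    unfolding neumann_inv_def by (subst sum.lessThan_Suc_shift) simp
  moreover have "deg i ?H < deg i G" if "?H \<noteq> 0"
  proof -
    have "0 < deg i G"
      using that by (auto intro: gr0I)
    moreover have "deg i ?H \<le> deg i G - 1"
      by (intro deg_sum_le order_trans[OF deg_neg_Delta_pE_funpow_le]) auto
    ultimately show ?thesis
      by linarith
  qed
  ultimately show ?thesis
    using deg_add_eq_left by metis
qed

lemma vars_neumann_inv: "vars (neumann_inv i p G) \<subseteq> vars G"
  unfolding neumann_inv_def
  by (intro order_trans[OF vars_sum] UN_least vars_neg_Delta_pE_funpow)

lemma vars_add_Delta_pE: "vars (G + Delta i (pE p G)) \<subseteq> vars G"
  using vars_add[of G] vars_Delta[of i "pE p G"] vars_pE[of p G] by blast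

text \<open>Neither \<open>i < n\<close> nor \<open>lvars p \<subseteq> {..<n}\<close> is needed: the shift operators never
  introduce variables that do not already occur.\<close>

theorem lemma1:
  fixes n i :: nat and p :: claurent
    and Op Inv :: "cpoly \<Rightarrow> cpoly" and T :: "nat \<Rightarrow> cpoly \<Rightarrow> cpoly"
  assumes "i < n" and "lvars p \<subseteq> {..<n}"
  defines "Op \<equiv> (\<lambda>G. G + Delta i (pE p G))"
    and "T \<equiv> (\<lambda>l G. Const ((-1) ^ l) * (Delta i ^^ l) ((pE p ^^ l) G))"
    and "Inv \<equiv> (\<lambda>G. \<Sum>l < (LEAST N. \<forall>l\<ge>N. T l G = 0). T l G)"
  shows "bij_betw Op (PolyRing n) (PolyRing n)
    \<and> (\<forall>G\<in>PolyRing n. \<exists>N. \<forall>l\<ge>N. T l G = 0)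
    \<and> (\<forall>G\<in>PolyRing n. Inv G \<in> PolyRing n \<and> Op (Inv G) = G \<and> Inv (Op G) = G)
    \<and> (\<forall>G\<in>PolyRing n. deg i G = deg i (Op G) \<and> deg i G = deg i (Inv G))"
proof -
  have T_eq: "T l G = (neg_Delta_pE i p ^^ l) G" for l G
    by (simp add: T_def neg_Delta_pE_funpow)
  have Op_eq: "Op G = G - neg_Delta_pE i p G" for G
    by (simp add: Op_def neg_Delta_pE_def)
  have vanish: "\<forall>l\<ge>Suc (deg i G). T l G = 0" for G
    by (simp add: T_eq neg_Delta_pE_funpow_eq_0)
  have Inv_eq: "Inv G = neumann_inv i p G" for G
    using sum_lessThan_LEAST_eventually_zero[OF vanish[of G]]
    by (simp add: Inv_def neumann_inv_def T_eq)
  have Op_closed: "Op G \<in> PolyRing n" and Inv_closed: "Inv G \<in> PolyRing n" if "G \<in> PolyRing n" for G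
    using that order_trans[OF vars_add_Delta_pE] order_trans[OF vars_neumann_inv]
    by (simp_all add: PolyRing_def Op_def Inv_eq)
  have Op_Inv: "Op (Inv G) = G" and Inv_Op: "Inv (Op G) = G" for G
    by (simp_all add: Inv_eq Op_eq neumann_inv_left neumann_inv_right)
  have deg_Op: "deg i (Op G) = deg i G" and deg_Inv: "deg i (Inv G) = deg i G" for G
    by (simp_all add: Inv_eq Op_eq deg_diff_neg_Delta_pE deg_neumann_inv)
  have "bij_betw Op (PolyRing n) (PolyRing n)"
    by (rule bij_betw_byWitness[where f' = Inv]) (auto simp: Op_Inv Inv_Op Op_closed Inv_closed)
  then show ?thesis
    using vanish Inv_closed by (auto simp: Op_Inv Inv_Op deg_Op deg_Inv)
qed

end
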